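(* Let $a,c$ be nonzero constants, $N\ge1$, and $c_i,d_i,p_i,q_i,\xi_{i0},\eta_{i0}$ arbitrary real or complex parameters (with $p_i,q_i\neq0$, $1-ap_i,1-aq_i\neq0$). Define $$\phi^{(i)}_{n,m}(k)=c_ip_i^n(1-cp_i)^m(1-ap_i)^{-k}e^{\xi_i}+d_iq_i^n(1-cq_i)^m(1-aq_i)^{-k}e^{\eta_i},\quad \xi_i=p_i^{-1}x_{-1}+\xi_{i0},\ \eta_i=q_i^{-1}x_{-1}+\eta_{i0},$$ and $\tau_{n,m}(x_{-1},k)=\det(\phi^{(i)}_{n+j-1,m}(k))_{1\le i,j\le N}$; alternatively (with $p_i+q_j\neq0$, $1+aq_j\ne0$, $c_{ij}$ arbitrary constants, $\eta_j=q_j^{-1}x_{-1}+\eta_{j0}$) $$\tau_{n,m}(x_{-1},k)=\det\Big(c_{ij}+\frac{1}{p_i+q_j}\Big(-\frac{p_i}{q_j}\Big)^n\Big(\frac{1-cp_i}{1+cq_j}\Big)^m\Big(\frac{1-ap_i}{1+aq_j}\Big)^{-k}e^{\xi_i+\eta_j}\Big)_{1\le i,j\le N}.$$ Then for all integers $n,m,k$: $$\Big(\tfrac1aD_{x_{-1}}-1\Big)\tau_{n,m}(k+1)\cdot\tau_{n,m}(k)+\tau_{n+1,m}(k+1)\tau_{n-1,m}(k)=0,$$ $$\Big(\tfrac1cD_{x_{-1}}-1\Big)\tau_{n,m}(k)\cdot\tau_{n,m+1}(k)+\tau_{n+1,m}(k)\tau_{n-1,m+1}(k)=0.$$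
   Context: Hirota operator: $D_x\,a\cdot b=(\partial_x-\partial_{x'})a(x)b(x')|_{x'=x}=a_xb-ab_x$; the term "$-1$" acts as $-ab$. *)

theory Defs
  imports "HOL-Analysis.Analysis" "Jordan_Normal_Form.Determinant"
begin

text \<open>Hirota bilinear derivative in the variable x (= x_{-1}):
  D_x f . g = f' g - f g'.\<close>
definition hirota_D :: "(complex \<Rightarrow> complex) \<Rightarrow> (complex \<Rightarrow> complex) \<Rightarrow> complex \<Rightarrow> complex" where
  "hirota_D f g x = deriv f x * g x - f x * deriv g x"

definition bilinear_eqs :: "complex \<Rightarrow> complex \<Rightarrow> (int \<Rightarrow> int \<Rightarrow> int \<Rightarrow> complex \<Rightarrow> complex) \<Rightarrow> bool" where
  "bilinear_eqs a c tau \<longleftrightarrow>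
     (\<forall>n m k x.
        (1/a) * hirota_D (tau n m (k+1)) (tau n m k) x - tau n m (k+1) x * tau n m k x
          + tau (n+1) m (k+1) x * tau (n-1) m k x = 0
      \<and> (1/c) * hirota_D (tau n m k) (tau n (m+1) k) x - tau n m k x * tau n (m+1) k x
          + tau (n+1) m k x * tau (n-1) (m+1) k x = 0)"

definition phi :: "complex \<Rightarrow> complex \<Rightarrow> (nat \<Rightarrow> complex) \<Rightarrow> (nat \<Rightarrow> complex) \<Rightarrow> (nat \<Rightarrow> complex)
    \<Rightarrow> (nat \<Rightarrow> complex) \<Rightarrow> (nat \<Rightarrow> complex) \<Rightarrow> (nat \<Rightarrow> complex) \<Rightarrow> nat \<Rightarrow> int \<Rightarrow> int \<Rightarrow> int \<Rightarrow> complex \<Rightarrow> complex" where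
  "phi a c cs ds p q xi0 eta0 i n m k x =
     cs i * p i powi n * (1 - c * p i) powi m * (1 - a * p i) powi (-k) * exp (x / p i + xi0 i)
   + ds i * q i powi n * (1 - c * q i) powi m * (1 - a * q i) powi (-k) * exp (x / q i + eta0 i)"

text \<open>tau_{n,m}(x,k) = det(phi^(i)_{n+j-1,m}(k))_{1<=i,j<=N}; here 0-based: column j uses n+j.\<close>
definition tau_casorati :: "complex \<Rightarrow> complex \<Rightarrow> nat \<Rightarrow> (nat \<Rightarrow> complex) \<Rightarrow> (nat \<Rightarrow> complex) \<Rightarrow> (nat \<Rightarrow> complex)
    \<Rightarrow> (nat \<Rightarrow> complex) \<Rightarrow> (nat \<Rightarrow> complex) \<Rightarrow> (nat \<Rightarrow> complex) \<Rightarrow> int \<Rightarrow> int \<Rightarrow> int \<Rightarrow> complex \<Rightarrow> complex" where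
  "tau_casorati a c N cs ds p q xi0 eta0 n m k x =
     det (mat N N (\<lambda>(i, j). phi a c cs ds p q xi0 eta0 i (n + int j) m k x))"

definition tau_gram :: "complex \<Rightarrow> complex \<Rightarrow> nat \<Rightarrow> (nat \<Rightarrow> nat \<Rightarrow> complex) \<Rightarrow> (nat \<Rightarrow> complex) \<Rightarrow> (nat \<Rightarrow> complex)
    \<Rightarrow> (nat \<Rightarrow> complex) \<Rightarrow> (nat \<Rightarrow> complex) \<Rightarrow> int \<Rightarrow> int \<Rightarrow> int \<Rightarrow> complex \<Rightarrow> complex" where
  "tau_gram a c N C p q xi0 eta0 n m k x =
     det (mat N N (\<lambda>(i, j). C i j + 1 / (p i + q j) * (- p i / q j) powi n
        * ((1 - c * p i) / (1 + c * q j)) powi m * ((1 - a * p i) / (1 + a * q j)) powi (-k)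
        * exp ((x / p i + xi0 i) + (x / q j + eta0 j))))"

end

(*
  Each equation has the form (1/a) D(tau1, tau0) - tau1 tau0 + tau1^+ tau0^- = 0 and is
  obtained from the Pluecker relation
    det A * det (A with columns j, l replaced by x, y)
      = det (A_j x) * det (A_l y) - det (A_l x) * det (A_j y).

  Casorati case: the columns psi_j satisfy d/dx psi_j = psi_(j-1), and the shift in k
  (or m) replaces psi_j by psi_j - a psi_(j+1).  Bordering the columns by the entry
  exp(a x) a^(N-j) preserves d/dx psi_j = psi_(j-1), and the bordered Casorati determinant
  is exp(a x) times the shifted one.  The Pluecker relation for the bordered matrix, with
  its first and last columns replaced, is the bilinear equation.

  Gram case: the tau functions in one equation are determinants of rank-one updates
  A + u v^T of a single Gram matrix A, and the x-derivative of each is g^T adj(A + u v^T) f,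
  where f g^T is the entrywise derivative.  The equation then follows from the formula for
  the adjugate of a rank-one update, again a consequence of the Pluecker relation.
*)

theory Submission
  imports Defs "Jordan_Normal_Form.Char_Poly"
begin

section \<open>Replacing a column and the Pluecker relation\<close>

definition set_col :: "'a mat \<Rightarrow> nat \<Rightarrow> (nat \<Rightarrow> 'a) \<Rightarrow> 'a mat" where
  "set_col A j v = mat (dim_row A) (dim_col A) (\<lambda>(i, l). if l = j then v i else A $$ (i, l))"

lemma set_col_carrier [simp]: "A \<in> carrier_mat n m \<Longrightarrow> set_col A j v \<in> carrier_mat n m"
  by (simp add: set_col_def)

lemma dim_set_col [simp]:
  "dim_row (set_col A j v) = dim_row A" "dim_col (set_col A j v) = dim_col A"
  by (simp_all add: set_col_def)

lemma index_set_col [simp]: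
  "i < dim_row A \<Longrightarrow> l < dim_col A \<Longrightarrow>
    set_col A j v $$ (i, l) = (if l = j then v i else A $$ (i, l))"
  by (simp add: set_col_def)

lemma set_col_cong:
  "A \<in> carrier_mat n m \<Longrightarrow> (\<And>i. i < n \<Longrightarrow> v i = w i) \<Longrightarrow> set_col A j v = set_col A j w"
  by (intro eq_matI) auto

lemma set_col_same:
  "A \<in> carrier_mat n m \<Longrightarrow> (\<And>i. i < n \<Longrightarrow> v i = A $$ (i, j)) \<Longrightarrow> set_col A j v = A"
  by (intro eq_matI) auto

lemma set_col_set_col_commute:
  "j \<noteq> l \<Longrightarrow> set_col (set_col A j v) l w = set_col (set_col A l w) j v"
  by (intro eq_matI) auto

lemma det_set_col:
  fixes A :: "'a::comm_ring_1 mat"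
  assumes A: "A \<in> carrier_mat n n" and j: "j < n"
  shows "det (set_col A j v) = (\<Sum>i<n. v i * cofactor A i j)"
proof -
  have "mat_delete (set_col A j v) i j = mat_delete A i j" if "i < n" for i
    using A j that by (intro eq_matI) (auto simp: mat_delete_def)
  then show ?thesis
    using A j by (subst laplace_expansion_column[of _ n j]) (auto simp: cofactor_def)
qed

lemma det_set_col_unit:
  fixes A :: "'a::comm_ring_1 mat"
  assumes A: "A \<in> carrier_mat n n" and j: "j < n" and r: "r < n"
  shows "det (set_col A j (\<lambda>i. if i = r then 1 else 0)) = cofactor A r j"
proof -
  have "det (set_col A j (\<lambda>i. if i = r then 1 else 0)) = (\<Sum>i<n. (if i = r then 1 else 0) * cofactor A i j)"
    by (rule det_set_col[OF A j])
  also have "\<dots> = (\<Sum>i<n. if i = r then cofactor A i j else 0)"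
    by (intro sum.cong) auto
  finally show ?thesis
    using r by simp
qed

lemma det_set_col_linear:
  fixes A :: "'a::comm_ring_1 mat"
  assumes "A \<in> carrier_mat n n" and "j < n"
  shows "det (set_col A j (\<lambda>i. c * v i + d * w i)) = c * det (set_col A j v) + d * det (set_col A j w)"
  using assms by (simp add: det_set_col sum_distrib_left sum.distrib algebra_simps)

lemma det_set_col_other_col:
  fixes A :: "'a::comm_ring_1 mat"
  assumes A: "A \<in> carrier_mat n n" and "j < n" "r < n" "r \<noteq> j"
    and "\<And>i. i < n \<Longrightarrow> v i = A $$ (i, r)"
  shows "det (set_col A j v) = 0"
  by (rule det_identical_columns[of _ n r j]) (use assms in auto)

lemma cramer_set_col:
  fixes A :: "'a::comm_ring_1 mat"
  assumes A: "A \<in> carrier_mat n n" and i: "i < n"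
  shows "(\<Sum>r<n. A $$ (i, r) * det (set_col A r x)) = det A * x i"
proof -
  have adj: "(\<Sum>r<n. A $$ (i, r) * cofactor A k r) = (if i = k then det A else 0)" if "k < n" for k
  proof -
    have "(A * adj_mat A) $$ (i, k) = (\<Sum>r<n. A $$ (i, r) * cofactor A k r)"
      using A i that by (simp add: adj_mat_def scalar_prod_def atLeast0LessThan)
    with adj_mat(2)[OF A] i that show ?thesis by (cases "i = k") auto
  qed
  have "(\<Sum>r<n. A $$ (i, r) * det (set_col A r x)) = (\<Sum>r<n. \<Sum>k<n. x k * (A $$ (i, r) * cofactor A k r))"
    using A by (simp add: det_set_col sum_distrib_left mult_ac)
  also have "\<dots> = (\<Sum>k<n. x k * (\<Sum>r<n. A $$ (i, r) * cofactor A k r))"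
    by (subst sum.swap) (simp add: sum_distrib_left)
  also have "\<dots> = (\<Sum>k<n. if k = i then x k * det A else 0)"
    by (intro sum.cong) (auto simp: adj)
  finally show ?thesis
    using i by simp
qed

lemma det_mult_linear_form:
  fixes A :: "'a::comm_ring_1 mat"
  assumes A: "A \<in> carrier_mat n n"
  shows "det A * (\<Sum>i<n. x i * g i) = (\<Sum>r<n. det (set_col A r x) * (\<Sum>i<n. A $$ (i, r) * g i))"
proof -
  have "det A * (\<Sum>i<n. x i * g i) = (\<Sum>i<n. (\<Sum>r<n. A $$ (i, r) * det (set_col A r x)) * g i)"
    using A by (simp add: cramer_set_col sum_distrib_left mult.assoc)
  also have "\<dots> = (\<Sum>i<n. \<Sum>r<n. det (set_col A r x) * (A $$ (i, r) * g i))"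
    by (simp add: sum_distrib_right sum_distrib_left mult_ac)
  also have "\<dots> = (\<Sum>r<n. det (set_col A r x) * (\<Sum>i<n. A $$ (i, r) * g i))"
    by (subst sum.swap) (simp add: sum_distrib_left)
  finally show ?thesis .
qed

lemma plucker_nonsingular:
  fixes A :: "'a::idom mat"
  assumes A: "A \<in> carrier_mat n n" and j: "j < n" and l: "l < n" and jl: "j \<noteq> l"
    and nonsingular: "det A \<noteq> 0"
  shows "det A * det (set_col (set_col A j x) l y) =
    det (set_col A j x) * det (set_col A l y) - det (set_col A l x) * det (set_col A j y)"
proof -
  define B where "B = set_col A l y"
  have B: "B \<in> carrier_mat n n"
    using A by (simp add: B_def)
  define f where "f v = det A * det (set_col B j v) - det (set_col A j v) * det B
      + det (set_col A l v) * det (set_col A j y)" for v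
  have f_sum: "f v = (\<Sum>i<n. v i * (det A * cofactor B i j - cofactor A i j * det B
      + cofactor A i l * det (set_col A j y)))" for v
    unfolding f_def det_set_col[OF B j, of v] det_set_col[OF A j, of v] det_set_col[OF A l, of v]
    by (simp add: sum_distrib_left sum_distrib_right sum.distrib sum_subtractf algebra_simps)
  have f_col: "f (\<lambda>i. A $$ (i, r)) = 0" if r: "r < n" for r
  proof -
    consider "r = j" | "r = l" | "r \<noteq> j" "r \<noteq> l"
      by blast
    then show ?thesis
    proof cases
      case 1
      have "set_col B j (\<lambda>i. A $$ (i, r)) = B" "set_col A j (\<lambda>i. A $$ (i, r)) = A"
        using A 1 j jl by (auto simp: B_def intro!: set_col_same)
      moreover have "det (set_col A l (\<lambda>i. A $$ (i, r))) = 0"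
        using A 1 jl j l by (intro det_set_col_other_col) auto
      ultimately show ?thesis
        by (simp add: f_def)
    next
      case 2
      have "set_col B j (\<lambda>i. A $$ (i, r)) = swapcols j l (set_col A j y)"
        using A 2 jl j l by (intro eq_matI) (auto simp: B_def)
      then have "det (set_col B j (\<lambda>i. A $$ (i, r))) = - det (set_col A j y)"
        using A j l jl by (simp add: det_swapcols)
      moreover have "set_col A l (\<lambda>i. A $$ (i, r)) = A"
        using A 2 by (auto intro!: set_col_same)
      moreover have "det (set_col A j (\<lambda>i. A $$ (i, r))) = 0"
        using A 2 jl j l by (intro det_set_col_other_col) auto
      ultimately show ?thesis
        by (simp add: f_def)
    next
      case 3
      have "det (set_col B j (\<lambda>i. A $$ (i, r))) = 0"
        using A B 3 j r by (intro det_set_col_other_col[OF B]) (auto simp: B_def)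
      moreover have "det (set_col A j (\<lambda>i. A $$ (i, r))) = 0" "det (set_col A l (\<lambda>i. A $$ (i, r))) = 0"
        using 3 by (auto intro: det_set_col_other_col[OF A j r] det_set_col_other_col[OF A l r])
      ultimately show ?thesis
        by (simp add: f_def)
    qed
  qed
  \<comment> \<open>f is linear and vanishes on every column of A\<close>
  have "det A * f x = (\<Sum>r<n. det (set_col A r x) * f (\<lambda>i. A $$ (i, r)))"
    unfolding f_sum by (rule det_mult_linear_form[OF A])
  also have "\<dots> = 0"
    by (simp add: f_col)
  finally have "f x = 0"
    using nonsingular by simp
  then show ?thesis
    by (simp add: f_def B_def set_col_set_col_commute[OF jl] algebra_simps)
qed

lemma plucker:
  fixes A :: "'a::idom mat"
  assumes A: "A \<in> carrier_mat n n" and j: "j < n" and l: "l < n" and jl: "j \<noteq> l"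
  shows "det A * det (set_col (set_col A j x) l y) =
    det (set_col A j x) * det (set_col A l y) - det (set_col A l x) * det (set_col A j y)"
proof -
  let ?ev0 = "\<lambda>p::'a poly. poly p 0"
  have ev0: "comm_ring_hom ?ev0"
    by unfold_locales auto
  have ev0_set_col: "map_mat ?ev0 (set_col P j' v) = set_col (map_mat ?ev0 P) j' (\<lambda>i. ?ev0 (v i))"
    for P :: "'a poly mat" and j' v
    by (intro eq_matI) auto
  \<comment> \<open>X I + A has a monic determinant and specialises to A at X = 0\<close>
  define P where "P = char_poly_matrix (- A)"
  have P: "P \<in> carrier_mat n n"
    using A by (simp add: P_def)
  have "coeff (det P) n = 1"
    using degree_monic_char_poly[of "- A" n] A by (simp add: P_def char_poly_def)
  then have "det P \<noteq> 0"
    by auto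
  from plucker_nonsingular[OF P j l jl this, of "\<lambda>i. [:x i:]" "\<lambda>i. [:y i:]"]
  have "?ev0 (det P * det (set_col (set_col P j (\<lambda>i. [:x i:])) l (\<lambda>i. [:y i:]))) =
    ?ev0 (det (set_col P j (\<lambda>i. [:x i:])) * det (set_col P l (\<lambda>i. [:y i:]))
      - det (set_col P l (\<lambda>i. [:x i:])) * det (set_col P j (\<lambda>i. [:y i:])))"
    by simp
  moreover have "map_mat ?ev0 P = A"
    using A by (intro eq_matI) (auto simp: P_def char_poly_matrix_def)
  ultimately show ?thesis
    by (simp add: comm_ring_hom.hom_det[OF ev0, symmetric] ev0_set_col)
qed

section \<open>Derivatives of determinants\<close>

lemma has_field_derivative_det_rows:
  fixes F :: "complex \<Rightarrow> nat \<Rightarrow> nat \<Rightarrow> complex"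
  assumes deriv: "\<And>i j. i < n \<Longrightarrow> j < n \<Longrightarrow> ((\<lambda>y. F y i j) has_field_derivative F' i j) (at x)"
  shows "((\<lambda>y. det (mat n n (\<lambda>(i, j). F y i j))) has_field_derivative
     (\<Sum>i<n. det (mat n n (\<lambda>(r, c). if r = i then F' r c else F x r c)))) (at x)"
proof -
  let ?P = "{p. p permutes {0..<n}}"
  have leibniz: "det (mat n n (\<lambda>(r, c). G r c)) = (\<Sum>p\<in>?P. signof p * (\<Prod>r=0..<n. G r (p r)))"
    for G :: "nat \<Rightarrow> nat \<Rightarrow> complex"
    unfolding det_def'[OF mat_carrier]
    by (intro sum.cong refl arg_cong2[where f = "(*)"] prod.cong) (auto simp: permutes_in_image)
  have "((\<lambda>y. \<Sum>p\<in>?P. signof p * (\<Prod>r=0..<n. F y r (p r))) has_field_derivative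
      (\<Sum>p\<in>?P. signof p * (\<Sum>i\<in>{0..<n}. F' i (p i) * (\<Prod>r\<in>{0..<n} - {i}. F x r (p r))))) (at x)"
    by (intro DERIV_sum DERIV_cmult has_field_derivative_prod deriv)
      (auto simp: permutes_in_image)
  also have "(\<Sum>p\<in>?P. signof p * (\<Sum>i\<in>{0..<n}. F' i (p i) * (\<Prod>r\<in>{0..<n} - {i}. F x r (p r))))
      = (\<Sum>i<n. \<Sum>p\<in>?P. signof p * (\<Prod>r=0..<n. if r = i then F' r (p r) else F x r (p r)))"
  proof -
    have "F' i (p i) * (\<Prod>r\<in>{0..<n} - {i}. F x r (p r))
        = (\<Prod>r=0..<n. if r = i then F' r (p r) else F x r (p r))" if "i < n" for i p
      using that by (subst prod.remove[of _ i]) (auto intro!: prod.cong)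
    then show ?thesis
      by (simp add: sum_distrib_left atLeast0LessThan) (rule sum.swap)
  qed
  finally show ?thesis
    unfolding leibniz by (simp add: if_distrib cong: if_cong)
qed

lemma has_field_derivative_det_cols:
  fixes F :: "complex \<Rightarrow> nat \<Rightarrow> nat \<Rightarrow> complex"
  assumes deriv: "\<And>i j. i < n \<Longrightarrow> j < n \<Longrightarrow> ((\<lambda>y. F y i j) has_field_derivative F' i j) (at x)"
  shows "((\<lambda>y. det (mat n n (\<lambda>(i, j). F y i j))) has_field_derivative
     (\<Sum>j<n. det (set_col (mat n n (\<lambda>(i, j). F x i j)) j (\<lambda>i. F' i j)))) (at x)"
proof -
  have transpose: "det (mat n n (\<lambda>(i, j). G j i)) = det (mat n n (\<lambda>(i, j). G i j))"
    for G :: "nat \<Rightarrow> nat \<Rightarrow> complex"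
  proof -
    have "mat n n (\<lambda>(i, j). G j i) = (mat n n (\<lambda>(i, j). G i j))\<^sup>T"
      by (intro eq_matI) auto
    then show ?thesis
      by (simp add: det_transpose[OF mat_carrier])
  qed
  have "((\<lambda>y. det (mat n n (\<lambda>(i, j). F y j i))) has_field_derivative
     (\<Sum>j<n. det (mat n n (\<lambda>(r, c). if r = j then F' c r else F x c r)))) (at x)"
    by (rule has_field_derivative_det_rows) (simp add: deriv)
  moreover have "det (mat n n (\<lambda>(r, c). if r = j then F' c r else F x c r))
      = det (set_col (mat n n (\<lambda>(i, j). F x i j)) j (\<lambda>i. F' i j))" for j
  proof -
    have "mat n n (\<lambda>(r, c). if c = j then F' r c else F x r c)
        = set_col (mat n n (\<lambda>(i, j). F x i j)) j (\<lambda>i. F' i j)"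
      by (intro eq_matI) auto
    then show ?thesis
      using transpose[of "\<lambda>r c. if c = j then F' r c else F x r c"] by simp
  qed
  moreover have "det (mat n n (\<lambda>(i, j). F y j i)) = det (mat n n (\<lambda>(i, j). F y i j))" for y
    by (rule transpose)
  ultimately show ?thesis
    by simp
qed

section \<open>Rank-one updates\<close>

definition rank_one_upd :: "'a::comm_ring_1 mat \<Rightarrow> (nat \<Rightarrow> 'a) \<Rightarrow> (nat \<Rightarrow> 'a) \<Rightarrow> 'a mat" where
  "rank_one_upd A u v = mat (dim_row A) (dim_col A) (\<lambda>(i, j). A $$ (i, j) + u i * v j)"

text \<open>adj_form A x v is the bilinear form v^T adj(A) x.\<close>

definition adj_form :: "'a::comm_ring_1 mat \<Rightarrow> (nat \<Rightarrow> 'a) \<Rightarrow> (nat \<Rightarrow> 'a) \<Rightarrow> 'a" where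
  "adj_form A x v = (\<Sum>j<dim_col A. v j * det (set_col A j x))"

lemma dim_rank_one_upd [simp]:
  "dim_row (rank_one_upd A u v) = dim_row A" "dim_col (rank_one_upd A u v) = dim_col A"
  by (simp_all add: rank_one_upd_def)

lemma det_rank_one_upd_first_cols:
  fixes A :: "'a::comm_ring_1 mat"
  assumes "m \<le> n" and "A \<in> carrier_mat n n"
  shows "det (mat n n (\<lambda>(i, j). A $$ (i, j) + (if j < m then u i * v j else 0)))
    = det A + (\<Sum>j<m. v j * det (set_col A j u))"
  using assms
proof (induction m arbitrary: A)
  case 0
  then have "mat n n (\<lambda>(i, j). A $$ (i, j) + (if j < 0 then u i * v j else 0)) = A"
    by (intro eq_matI) auto
  then show ?case
    by simp
next
  case (Suc m)
  let ?K = "\<lambda>B. mat n n (\<lambda>(i, j). B $$ (i, j) + (if j < m then u i * v j else 0))"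
  have m: "m < n"
    using Suc by simp
  have K: "?K A \<in> carrier_mat n n"
    by simp
  have "mat n n (\<lambda>(i, j). A $$ (i, j) + (if j < Suc m then u i * v j else 0))
      = set_col (?K A) m (\<lambda>i. 1 * ?K A $$ (i, m) + v m * u i)"
    using m by (intro eq_matI) auto
  then have "det (mat n n (\<lambda>(i, j). A $$ (i, j) + (if j < Suc m then u i * v j else 0)))
      = 1 * det (set_col (?K A) m (\<lambda>i. ?K A $$ (i, m))) + v m * det (set_col (?K A) m u)"
    by (simp only: det_set_col_linear[OF K m])
  also have "set_col (?K A) m (\<lambda>i. ?K A $$ (i, m)) = ?K A"
    by (rule set_col_same[OF K]) simp
  also have "set_col (?K A) m u = ?K (set_col A m u)"
    using Suc.prems by (intro eq_matI) auto
  also have "det (?K (set_col A m u)) = det (set_col A m u)"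
  proof -
    \<comment> \<open>the induction hypothesis at set_col A m u, whose column m is u\<close>
    have "det (set_col (set_col A m u) j u) = 0" if "j < m" for j
      using that m Suc.prems by (intro det_set_col_other_col[of _ n j m]) auto
    then show ?thesis
      using Suc by simp
  qed
  finally show ?case
    using Suc m by simp
qed

lemma det_rank_one_upd:
  fixes A :: "'a::comm_ring_1 mat"
  assumes A: "A \<in> carrier_mat n n"
  shows "det (rank_one_upd A u v) = det A + adj_form A u v"
proof -
  have "rank_one_upd A u v = mat n n (\<lambda>(i, j). A $$ (i, j) + (if j < n then u i * v j else 0))"
    using A by (intro eq_matI) (auto simp: rank_one_upd_def)
  then show ?thesis
    using det_rank_one_upd_first_cols[OF order.refl A] A by (simp add: adj_form_def)
qed

lemma adj_form_linear_left:
  fixes A :: "'a::comm_ring_1 mat"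
  assumes "A \<in> carrier_mat n n"
  shows "adj_form A (\<lambda>i. c * x i + d * y i) v = c * adj_form A x v + d * adj_form A y v"
  using assms by (simp add: adj_form_def det_set_col_linear sum.distrib sum_distrib_left algebra_simps)

lemma adj_form_linear_right:
  "adj_form A x (\<lambda>j. c * v j + d * w j) = c * adj_form A x v + d * adj_form A x w"
  by (simp add: adj_form_def sum.distrib sum_distrib_left algebra_simps)

lemma adj_form_rank_one_upd:
  fixes A :: "'a::idom mat"
  assumes A: "A \<in> carrier_mat n n"
  shows "det A * adj_form (rank_one_upd A u v) y w
    = det A * adj_form A y w + adj_form A u v * adj_form A y w - adj_form A u w * adj_form A y v"
proof -
  let ?Y = "\<lambda>j. det (set_col A j y)" and ?U = "\<lambda>j. det (set_col A j u)"
  have col: "det A * det (set_col (rank_one_upd A u v) j y)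
      = det A * ?Y j + (\<Sum>l<n. v l * (?Y j * ?U l - ?Y l * ?U j))" if j: "j < n" for j
  proof -
    define v' where "v' l = (if l = j then 0 else v l)" for l
    have "set_col (rank_one_upd A u v) j y = rank_one_upd (set_col A j y) u v'"
      using A j by (intro eq_matI) (auto simp: rank_one_upd_def v'_def)
    then have "det A * det (set_col (rank_one_upd A u v) j y)
        = det A * ?Y j + (\<Sum>l<n. v' l * (det A * det (set_col (set_col A j y) l u)))"
      using A by (simp add: det_rank_one_upd[OF set_col_carrier[OF A]] adj_form_def
          sum_distrib_left algebra_simps)
    also have "(\<Sum>l<n. v' l * (det A * det (set_col (set_col A j y) l u)))
        = (\<Sum>l<n. v l * (?Y j * ?U l - ?Y l * ?U j))"
      using plucker[OF A j] by (intro sum.cong) (auto simp: v'_def)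
    finally show ?thesis .
  qed
  have "det A * adj_form (rank_one_upd A u v) y w
      = (\<Sum>j<n. w j * (det A * det (set_col (rank_one_upd A u v) j y)))"
    using A by (simp add: adj_form_def sum_distrib_left mult_ac)
  also have "\<dots> = (\<Sum>j<n. w j * (det A * ?Y j + (\<Sum>l<n. v l * (?Y j * ?U l - ?Y l * ?U j))))"
    by (intro sum.cong) (simp_all add: col)
  also have "\<dots> = det A * adj_form A y w
      + (\<Sum>j<n. w j * ?Y j) * (\<Sum>l<n. v l * ?U l) - (\<Sum>l<n. v l * ?Y l) * (\<Sum>j<n. w j * ?U j)"
    using A by (simp add: adj_form_def sum_product sum_distrib_left sum_subtractf sum.distrib
        algebra_simps)
  finally show ?thesis
    using A by (simp add: adj_form_def)
qed

lemma hirota_rank_one: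
  fixes A :: "'a::field mat"
  assumes A: "A \<in> carrier_mat n n" and a: "a \<noteq> 0"
  shows "(1 / a) * (adj_form (rank_one_upd A (\<lambda>i. a * u i) v) (\<lambda>i. f i + a * u i) (\<lambda>j. g j + a * v j)
        * det A - det (rank_one_upd A (\<lambda>i. a * u i) v) * adj_form A f g)
      - det (rank_one_upd A (\<lambda>i. a * u i) v) * det A
      + det (rank_one_upd A u (\<lambda>j. - g j)) * det (rank_one_upd A f (\<lambda>j. - v j)) = 0"
proof -
  have lin_left: "adj_form A (\<lambda>i. c * x i + d * y i) z = c * adj_form A x z + d * adj_form A y z"
    for c d x y z
    by (rule adj_form_linear_left[OF A])
  have lin_right: "adj_form A x (\<lambda>j. c * z j + d * z' j) = c * adj_form A x z + d * adj_form A x z'"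
    for c d x z z'
    by (rule adj_form_linear_right)
  have "adj_form A (\<lambda>i. a * u i) v = a * adj_form A u v"
    using lin_left[of a u 0 u v] by simp
  moreover have "adj_form A u (\<lambda>j. - g j) = - adj_form A u g"
    using lin_right[of u "-1" g 0 g] by simp
  moreover have "adj_form A f (\<lambda>j. - v j) = - adj_form A f v"
    using lin_right[of f "-1" v 0 v] by simp
  moreover have "adj_form A (\<lambda>i. f i + a * u i) (\<lambda>j. g j + a * v j)
      = adj_form A f g + a * adj_form A f v + a * adj_form A u g + a * a * adj_form A u v"
    using lin_left[of 1 f a u] lin_right[of _ 1 g a v] by (simp add: algebra_simps)
  moreover have "adj_form A (\<lambda>i. f i + a * u i) v = adj_form A f v + a * adj_form A u v"
    using lin_left[of 1 f a u v] by simp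
  moreover have "adj_form A (\<lambda>i. a * u i) (\<lambda>j. g j + a * v j) = a * adj_form A u g + a * a * adj_form A u v"
    using lin_left[of a u 0 u] lin_right[of u 1 g a v] by (simp add: algebra_simps)
  ultimately show ?thesis
    using adj_form_rank_one_upd[OF A, of "\<lambda>i. a * u i" v "\<lambda>i. f i + a * u i" "\<lambda>j. g j + a * v j"] a
    by (simp add: det_rank_one_upd[OF A] field_simps)
qed

lemma has_field_derivative_det_rank_one:
  fixes F :: "complex \<Rightarrow> nat \<Rightarrow> nat \<Rightarrow> complex"
  assumes "\<And>i j. i < n \<Longrightarrow> j < n \<Longrightarrow> ((\<lambda>y. F y i j) has_field_derivative f i * g j) (at x)"
  shows "((\<lambda>y. det (mat n n (\<lambda>(i, j). F y i j))) has_field_derivative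
    adj_form (mat n n (\<lambda>(i, j). F x i j)) f g) (at x)"
proof -
  have "det (set_col (mat n n (\<lambda>(i, j). F x i j)) j (\<lambda>i. f i * g j))
      = g j * det (set_col (mat n n (\<lambda>(i, j). F x i j)) j f)" if "j < n" for j
    by (simp add: det_set_col[OF mat_carrier that] sum_distrib_left mult_ac)
  then show ?thesis
    using has_field_derivative_det_cols[of n F "\<lambda>i j. f i * g j", OF assms]
    by (simp add: adj_form_def)
qed

section \<open>Casorati determinants\<close>

definition casorati_mat :: "nat \<Rightarrow> (int \<Rightarrow> 'a \<Rightarrow> nat \<Rightarrow> 'b) \<Rightarrow> int \<Rightarrow> 'a \<Rightarrow> 'b mat" where
  "casorati_mat N \<psi> s y = mat N N (\<lambda>(i, l). \<psi> (s + int l) y i)"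

definition casorati :: "nat \<Rightarrow> (int \<Rightarrow> 'a \<Rightarrow> nat \<Rightarrow> 'b::comm_ring_1) \<Rightarrow> int \<Rightarrow> 'a \<Rightarrow> 'b" where
  "casorati N \<psi> s y = det (casorati_mat N \<psi> s y)"

lemma casorati_mat_carrier [simp]: "casorati_mat N \<psi> s y \<in> carrier_mat N N"
  by (simp add: casorati_mat_def)

lemma casorati_cong:
  "(\<And>j y i. i < N \<Longrightarrow> \<psi> j y i = \<phi> j y i) \<Longrightarrow> casorati N \<psi> = casorati N \<phi>"
  unfolding casorati_def casorati_mat_def by (intro ext arg_cong[where f = det] eq_matI) auto

lemma has_field_derivative_casorati:
  fixes \<psi> :: "int \<Rightarrow> complex \<Rightarrow> nat \<Rightarrow> complex"
  assumes N: "0 < N"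
    and deriv: "\<And>j i. i < N \<Longrightarrow> ((\<lambda>y. \<psi> j y i) has_field_derivative \<psi> (j - 1) x i) (at x)"
  shows "(casorati N \<psi> s has_field_derivative det (set_col (casorati_mat N \<psi> s x) 0 (\<psi> (s - 1) x))) (at x)"
proof -
  have "casorati N \<psi> s = (\<lambda>y. det (mat N N (\<lambda>(i, l). \<psi> (s + int l) y i)))"
    by (simp add: fun_eq_iff casorati_def casorati_mat_def)
  then have "(casorati N \<psi> s has_field_derivative
      (\<Sum>l<N. det (set_col (casorati_mat N \<psi> s x) l (\<psi> (s + int l - 1) x)))) (at x)"
    using has_field_derivative_det_cols[of N "\<lambda>y i l. \<psi> (s + int l) y i"
        "\<lambda>i l. \<psi> (s + int l - 1) x i" x] deriv
    by (simp add: casorati_mat_def)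
  moreover have "(\<Sum>l<N. det (set_col (casorati_mat N \<psi> s x) l (\<psi> (s + int l - 1) x)))
      = det (set_col (casorati_mat N \<psi> s x) 0 (\<psi> (s - 1) x))"
  proof (subst sum.remove[of _ 0])
    have "det (set_col (casorati_mat N \<psi> s x) l (\<psi> (s + int l - 1) x)) = 0" if "0 < l" "l < N" for l
    proof (rule det_set_col_other_col[of _ N l "l - 1"])
      show "\<psi> (s + int l - 1) x i = casorati_mat N \<psi> s x $$ (i, l - 1)" if "i < N" for i
        using that \<open>0 < l\<close> \<open>l < N\<close> by (simp add: casorati_mat_def of_nat_diff algebra_simps)
    qed (use that in auto)
    then show "det (set_col (casorati_mat N \<psi> s x) 0 (\<psi> (s + int 0 - 1) x))
        + (\<Sum>l\<in>{..<N} - {0}. det (set_col (casorati_mat N \<psi> s x) l (\<psi> (s + int l - 1) x)))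
      = det (set_col (casorati_mat N \<psi> s x) 0 (\<psi> (s - 1) x))"
      by simp
  qed (use N in auto)
  ultimately show ?thesis
    by simp
qed

lemma det_geometric_border:
  fixes g :: "nat \<Rightarrow> nat \<Rightarrow> 'a::comm_ring_1"
  shows "det (mat (Suc N) (Suc N) (\<lambda>(i, c). if i < N then g c i else b * a ^ (N - c)))
    = b * det (mat N N (\<lambda>(i, c). g c i - a * g (c + 1) i))"
proof -
  define K where "K = mat (Suc N) (Suc N) (\<lambda>(i, c). if i < N then g c i else b * a ^ (N - c))"
  define L :: "'a mat"
    where "L = mat (Suc N) (Suc N) (\<lambda>(r, c). of_bool (r = c) - a * of_bool (r = Suc c))"
  have K: "K \<in> carrier_mat (Suc N) (Suc N)" and L: "L \<in> carrier_mat (Suc N) (Suc N)"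
    by (simp_all add: K_def L_def)
  \<comment> \<open>right multiplication by L subtracts a times column c + 1 from column c\<close>
  have "det L = 1"
    using det_lower_triangular[OF _ L] by (simp add: L_def prod_list_diag_prod)
  then have "det K = det (K * L)"
    by (simp add: det_mult[OF K L])
  also have "K * L = mat (Suc N) (Suc N) (\<lambda>(i, c). K $$ (i, c) - a * (if c < N then K $$ (i, Suc c) else 0))"
    (is "_ = ?K'")
  proof (rule eq_matI)
    fix i c
    assume "i < dim_row ?K'" and "c < dim_col ?K'"
    then have i: "i < Suc N" and c: "c < Suc N"
      by auto
    have shift: "(\<Sum>r<Suc N. f r * (of_bool (r = c) - a * of_bool (r = Suc c)))
        = f c - a * (if c < N then f (Suc c) else 0)" for f
    proof -
      have "(\<Sum>r<Suc N. f r * (of_bool (r = c) - a * of_bool (r = Suc c)))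
          = (\<Sum>r<Suc N. f r * of_bool (r = c)) - a * (\<Sum>r<Suc N. f r * of_bool (r = Suc c))"
        by (simp only: right_diff_distrib sum_subtractf sum_distrib_left mult.left_commute)
      then show ?thesis
        using c by (simp add: Int_insert_right lessThan_def)
    qed
    have "(K * L) $$ (i, c) = (\<Sum>r<Suc N. K $$ (i, r) * (of_bool (r = c) - a * of_bool (r = Suc c)))"
      using K L i c by (simp add: scalar_prod_def atLeast0LessThan L_def)
    also have "\<dots> = K $$ (i, c) - a * (if c < N then K $$ (i, Suc c) else 0)"
      by (rule shift)
    finally show "(K * L) $$ (i, c) = ?K' $$ (i, c)"
      using i c by simp
  qed (use K L in auto)
  also have "det ?K' = (\<Sum>c<Suc N. ?K' $$ (N, c) * cofactor ?K' N c)"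
    by (rule laplace_expansion_row) auto
  also have "\<dots> = b * cofactor ?K' N N"
  proof -
    have "?K' $$ (N, c) = 0" if "c < N" for c
    proof -
      have "N - c = Suc (N - Suc c)"
        using that by simp
      then show ?thesis
        using that by (simp add: K_def)
    qed
    then show ?thesis
      by (simp add: K_def)
  qed
  also have "cofactor ?K' N N = det (mat N N (\<lambda>(i, c). g c i - a * g (c + 1) i))"
  proof -
    have "mat_delete ?K' N N = mat N N (\<lambda>(i, c). g c i - a * g (c + 1) i)"
      by (intro eq_matI) (auto simp: mat_delete_def K_def insert_index_def)
    then show ?thesis
      by (simp add: cofactor_def)
  qed
  finally show ?thesis
    by (simp add: K_def)
qed

text \<open>The bordering row exp(a y) a^(N - j) satisfies d/dy f_j = f_(j-1), like the columns
  psi_j themselves.\<close>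

definition border_family :: "complex \<Rightarrow> nat \<Rightarrow> (int \<Rightarrow> complex \<Rightarrow> nat \<Rightarrow> complex)
    \<Rightarrow> int \<Rightarrow> complex \<Rightarrow> nat \<Rightarrow> complex" where
  "border_family a N \<psi> j y i = (if i < N then \<psi> j y i else exp (a * y) * a powi (int N - j))"

lemma casorati_mat_border_family [simp]:
  "casorati_mat N (border_family a N \<psi>) s y = casorati_mat N \<psi> s y"
  by (intro eq_matI) (simp_all add: casorati_mat_def border_family_def)

lemma border_family_deriv:
  assumes a: "a \<noteq> 0"
    and deriv: "\<And>j i. i < N \<Longrightarrow> ((\<lambda>y. \<psi> j y i) has_field_derivative \<psi> (j - 1) x i) (at x)"
  shows "((\<lambda>y. border_family a N \<psi> j y i) has_field_derivative border_family a N \<psi> (j - 1) x i) (at x)"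
proof (cases "i < N")
  case True
  then show ?thesis
    by (simp add: border_family_def deriv)
next
  case False
  have "a powi (int N - (j - 1)) = a * a powi (int N - j)"
    using a power_int_add_1'[of a "int N - j"] by (simp add: algebra_simps)
  then show ?thesis
    using False by (auto simp: border_family_def intro!: derivative_eq_intros)
qed

lemma casorati_border_family:
  assumes a: "a \<noteq> 0"
  shows "casorati (Suc N) (border_family a N \<psi>) s y
    = exp (a * y) * a powi (- s) * casorati N (\<lambda>j y i. \<psi> j y i - a * \<psi> (j + 1) y i) s y"
proof -
  have "a powi (int N - (s + int c)) = a powi (- s) * a ^ (N - c)" if "c \<le> N" for c
  proof -
    have "int N - (s + int c) = - s + int (N - c)"
      using that by simp
    then have "a powi (int N - (s + int c)) = a powi (- s) * a powi int (N - c)"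
      using a by (simp only: power_int_add[of a "- s" "int (N - c)"] simp_thms)
    then show ?thesis
      by simp
  qed
  then have "casorati_mat (Suc N) (border_family a N \<psi>) s y
      = mat (Suc N) (Suc N) (\<lambda>(i, c). if i < N then \<psi> (s + int c) y i
          else (exp (a * y) * a powi (- s)) * a ^ (N - c))"
    by (intro eq_matI) (auto simp: casorati_mat_def border_family_def)
  then show ?thesis
    by (simp add: casorati_def det_geometric_border casorati_mat_def algebra_simps)
qed

lemma mat_delete_casorati_mat_last:
  "mat_delete (casorati_mat (Suc N) \<psi> s y) N N = casorati_mat N \<psi> s y"
  by (intro eq_matI) (auto simp: mat_delete_def casorati_mat_def insert_index_def)

lemma mat_delete_casorati_mat_first:
  "mat_delete (casorati_mat (Suc N) \<psi> s y) N 0 = casorati_mat N \<psi> (s + 1) y"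
  by (intro eq_matI) (auto simp: mat_delete_def casorati_mat_def insert_index_def algebra_simps)

lemma mat_delete_set_col_last:
  assumes "A \<in> carrier_mat (Suc N) (Suc N)" and "j < N"
  shows "mat_delete (set_col A j v) N N = set_col (mat_delete A N N) j v"
  using assms by (intro eq_matI) (auto simp: mat_delete_def insert_index_def)

lemma det_casorati_mat_set_last_col:
  "det (set_col (casorati_mat (Suc N) \<psi> s y) N (\<psi> (s - 1) y))
    = (- 1) ^ N * casorati (Suc N) \<psi> (s - 1) y"
proof -
  let ?A = "set_col (casorati_mat (Suc N) \<psi> s y) N (\<psi> (s - 1) y)"
  have "?A \<in> carrier_mat (1 + N) (1 + N)"
    by simp
  from det_swap_cols[OF this]
  have "det ?A = (- 1) ^ N * det (mat (1 + N) (1 + N) (\<lambda>(i, j). ?A $$ (i, if j < 1 then j + N else j - 1)))"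
    by simp
  also have "mat (1 + N) (1 + N) (\<lambda>(i, j). ?A $$ (i, if j < 1 then j + N else j - 1))
      = casorati_mat (Suc N) \<psi> (s - 1) y"
    by (intro eq_matI) (auto simp: casorati_mat_def of_nat_diff algebra_simps)
  finally show ?thesis
    by (simp add: casorati_def)
qed

lemma det_border_family_set_first_col:
  fixes \<psi> :: "int \<Rightarrow> complex \<Rightarrow> nat \<Rightarrow> complex"
  assumes a: "a \<noteq> 0" and N: "0 < N"
    and deriv: "\<And>j y i. i < N \<Longrightarrow> ((\<lambda>y. \<psi> j y i) has_field_derivative \<psi> (j - 1) y i) (at y)"
  defines "\<theta> \<equiv> \<lambda>j y i. \<psi> j y i - a * \<psi> (j + 1) y i"
  shows "det (set_col (casorati_mat (Suc N) (border_family a N \<psi>) s x) 0 (border_family a N \<psi> (s - 1) x))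
    = exp (a * x) * a powi (- s) * (a * casorati N \<theta> s x + deriv (casorati N \<theta> s) x)"
proof -
  have "((\<lambda>y. \<theta> j y i) has_field_derivative \<theta> (j - 1) y i) (at y)" if "i < N" for j y i
  proof -
    have "((\<lambda>y. \<psi> j y i - a * \<psi> (j + 1) y i) has_field_derivative
        \<psi> (j - 1) y i - a * \<psi> (j + 1 - 1) y i) (at y)"
      by (intro DERIV_diff DERIV_cmult deriv that)
    then show ?thesis
      by (simp add: \<theta>_def)
  qed
  from has_field_derivative_casorati[of N \<theta> x s, OF N this]
  have dQ: "(casorati N \<theta> s has_field_derivative deriv (casorati N \<theta> s) x) (at x)"
    by (metis DERIV_imp_deriv)
  have "(casorati (Suc N) (border_family a N \<psi>) s has_field_derivative
      det (set_col (casorati_mat (Suc N) (border_family a N \<psi>) s x) 0 (border_family a N \<psi> (s - 1) x))) (at x)"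
    by (intro has_field_derivative_casorati border_family_deriv a deriv) auto
  moreover have "(casorati (Suc N) (border_family a N \<psi>) s has_field_derivative
      exp (a * x) * a powi (- s) * (a * casorati N \<theta> s x + deriv (casorati N \<theta> s) x)) (at x)"
  proof -
    have "casorati (Suc N) (border_family a N \<psi>) s = (\<lambda>y. exp (a * y) * a powi (- s) * casorati N \<theta> s y)"
      using casorati_border_family[OF a] by (simp add: \<theta>_def fun_eq_iff)
    moreover have "((\<lambda>y. exp (a * y) * a powi (- s)) has_field_derivative a * exp (a * x) * a powi (- s)) (at x)"
      by (auto intro!: derivative_eq_intros)
    from DERIV_mult'[OF this dQ]
    have "((\<lambda>y. exp (a * y) * a powi (- s) * casorati N \<theta> s y) has_field_derivative
        exp (a * x) * a powi (- s) * (a * casorati N \<theta> s x + deriv (casorati N \<theta> s) x)) (at x)"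
      by (simp add: algebra_simps)
    ultimately show ?thesis
      by simp
  qed
  ultimately show ?thesis
    by (rule DERIV_unique)
qed

lemma casorati_hirota:
  fixes \<psi> :: "int \<Rightarrow> complex \<Rightarrow> nat \<Rightarrow> complex"
  assumes a: "a \<noteq> 0" and N: "0 < N"
    and deriv: "\<And>j y i. i < N \<Longrightarrow> ((\<lambda>y. \<psi> j y i) has_field_derivative \<psi> (j - 1) y i) (at y)"
  defines "\<theta> \<equiv> \<lambda>j y i. \<psi> j y i - a * \<psi> (j + 1) y i"
  shows "(1 / a) * hirota_D (casorati N \<psi> s) (casorati N \<theta> s) x
      - casorati N \<psi> s x * casorati N \<theta> s x + casorati N \<psi> (s + 1) x * casorati N \<theta> (s - 1) x = 0"
proof -
  let ?P = "casorati N \<psi>" and ?Q = "casorati N \<theta>" and ?\<psi>' = "border_family a N \<psi>"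
  define M where "M = casorati_mat (Suc N) ?\<psi>' s x"
  define e :: "nat \<Rightarrow> complex" where "e = (\<lambda>i. if i = N then 1 else 0)"
  define K where "K = exp (a * x) * a powi (- s)"
  have M: "M \<in> carrier_mat (Suc N) (Suc N)"
    by (simp add: M_def)
  have bordered: "casorati (Suc N) ?\<psi>' t x = exp (a * x) * a powi (- t) * ?Q t x" for t
    unfolding \<theta>_def by (rule casorati_border_family[OF a])
  have dP: "deriv (?P s) x = det (set_col (casorati_mat N \<psi> s x) 0 (\<psi> (s - 1) x))"
    by (intro DERIV_imp_deriv has_field_derivative_casorati N deriv)
  have "det M * det (set_col (set_col M 0 (?\<psi>' (s - 1) x)) N e)
      = det (set_col M 0 (?\<psi>' (s - 1) x)) * det (set_col M N e)
        - det (set_col M N (?\<psi>' (s - 1) x)) * det (set_col M 0 e)"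
    by (rule plucker[OF M]) (use N in auto)
  moreover have "det M = K * ?Q s x"
    using bordered[of s] by (simp add: M_def K_def casorati_def)
  moreover have "det (set_col (set_col M 0 (?\<psi>' (s - 1) x)) N e) = deriv (?P s) x"
  proof -
    have "det (set_col (set_col M 0 (?\<psi>' (s - 1) x)) N e) = cofactor (set_col M 0 (?\<psi>' (s - 1) x)) N N"
      unfolding e_def using M by (intro det_set_col_unit) auto
    also have "\<dots> = det (set_col (casorati_mat N \<psi> s x) 0 (?\<psi>' (s - 1) x))"
      using M N by (simp add: cofactor_def mat_delete_set_col_last M_def mat_delete_casorati_mat_last
          flip: power_add)
    also have "set_col (casorati_mat N \<psi> s x) 0 (?\<psi>' (s - 1) x) = set_col (casorati_mat N \<psi> s x) 0 (\<psi> (s - 1) x)"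
      by (intro set_col_cong[OF casorati_mat_carrier]) (simp add: border_family_def)
    finally show ?thesis
      by (simp add: dP)
  qed
  moreover have "det (set_col M 0 (?\<psi>' (s - 1) x)) = K * (a * ?Q s x + deriv (?Q s) x)"
    unfolding M_def K_def \<theta>_def by (rule det_border_family_set_first_col[of a N \<psi>, OF a N deriv])
  moreover have "det (set_col M N e) = ?P s x"
    using det_set_col_unit[OF M, of N N]
    by (simp add: e_def cofactor_def M_def mat_delete_casorati_mat_last casorati_def flip: power_add)
  moreover have "det (set_col M N (?\<psi>' (s - 1) x)) = (- 1) ^ N * (K * a * ?Q (s - 1) x)"
  proof -
    have "a powi (- (s - 1)) = a powi (- s) * a"
      using a power_int_add_1[of a "- s"] by simp
    then show ?thesis
      using bordered[of "s - 1"] by (simp add: M_def K_def det_casorati_mat_set_last_col)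
  qed
  moreover have "det (set_col M 0 e) = (- 1) ^ N * ?P (s + 1) x"
    using det_set_col_unit[OF M, of 0 N]
    by (simp add: e_def cofactor_def M_def mat_delete_casorati_mat_first casorati_def)
  ultimately have "K * (?Q s x * deriv (?P s) x + a * (?P (s + 1) x * ?Q (s - 1) x))
      = K * (?P s x * deriv (?Q s) x + a * (?P s x * ?Q s x))"
    by (simp add: algebra_simps)
  moreover have "K \<noteq> 0"
    using a by (simp add: K_def)
  ultimately have "?Q s x * deriv (?P s) x + a * (?P (s + 1) x * ?Q (s - 1) x)
      = ?P s x * deriv (?Q s) x + a * (?P s x * ?Q s x)"
    by (rule mult_left_cancel[THEN iffD1, rotated])
  then show ?thesis
    using a by (simp add: hirota_D_def field_simps)
qed

section \<open>The Casorati solution\<close>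

definition plane_wave :: "complex \<Rightarrow> complex \<Rightarrow> complex \<Rightarrow> complex \<Rightarrow> complex
    \<Rightarrow> int \<Rightarrow> int \<Rightarrow> int \<Rightarrow> complex \<Rightarrow> complex" where
  "plane_wave a c s r x0 n m k y =
     s * r powi n * (1 - c * r) powi m * (1 - a * r) powi (- k) * exp (y / r + x0)"

lemma phi_eq_plane_waves:
  "phi a c cs ds p q xi0 eta0 i n m k y
    = plane_wave a c (cs i) (p i) (xi0 i) n m k y + plane_wave a c (ds i) (q i) (eta0 i) n m k y"
  by (simp add: phi_def plane_wave_def)

lemma plane_wave_succ_n:
  "r \<noteq> 0 \<Longrightarrow> plane_wave a c s r x0 (n + 1) m k y = r * plane_wave a c s r x0 n m k y"
  by (simp add: plane_wave_def power_int_add_1)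

lemma plane_wave_succ_m:
  "1 - c * r \<noteq> 0 \<Longrightarrow> plane_wave a c s r x0 n (m + 1) k y = (1 - c * r) * plane_wave a c s r x0 n m k y"
  by (simp add: plane_wave_def power_int_add_1)

lemma plane_wave_succ_k:
  assumes "1 - a * r \<noteq> 0"
  shows "plane_wave a c s r x0 n m (k + 1) y = plane_wave a c s r x0 n m k y / (1 - a * r)"
proof -
  have "(1 - a * r) powi (- (k + 1)) = (1 - a * r) powi (- k) / (1 - a * r)"
    using assms power_int_diff[of "1 - a * r" "- k" 1] by simp
  then show ?thesis
    by (simp add: plane_wave_def)
qed

lemma plane_wave_shift_k:
  assumes "r \<noteq> 0" and "1 - a * r \<noteq> 0"
  shows "plane_wave a c s r x0 n m k y
    = plane_wave a c s r x0 n m (k + 1) y - a * plane_wave a c s r x0 (n + 1) m (k + 1) y"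
proof -
  let ?w = "plane_wave a c s r x0 n m k y"
  have "plane_wave a c s r x0 n m (k + 1) y - a * plane_wave a c s r x0 (n + 1) m (k + 1) y
      = (?w - a * (r * ?w)) / (1 - a * r)"
    using assms by (simp add: plane_wave_succ_n plane_wave_succ_k diff_divide_distrib)
  also have "?w - a * (r * ?w) = (1 - a * r) * ?w"
    by (simp add: algebra_simps)
  finally show ?thesis
    using assms by simp
qed

lemma plane_wave_shift_m:
  assumes "r \<noteq> 0" and "1 - c * r \<noteq> 0"
  shows "plane_wave a c s r x0 n (m + 1) k y
    = plane_wave a c s r x0 n m k y - c * plane_wave a c s r x0 (n + 1) m k y"
  using assms by (simp add: plane_wave_succ_n plane_wave_succ_m) (simp add: algebra_simps)

lemma plane_wave_deriv:
  assumes "r \<noteq> 0"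
  shows "((\<lambda>y. plane_wave a c s r x0 n m k y) has_field_derivative plane_wave a c s r x0 (n - 1) m k y) (at y)"
proof -
  have "r powi (n - 1) = r powi n / r"
    using assms power_int_diff[of r n 1] by simp
  then show ?thesis
    using assms unfolding plane_wave_def by (auto intro!: derivative_eq_intros)
qed

lemma bilinear_eqs_tau_casorati:
  assumes a: "a \<noteq> 0" and c: "c \<noteq> 0" and N: "0 < N"
    and nz: "\<forall>i<N. p i \<noteq> 0 \<and> q i \<noteq> 0 \<and> 1 - a * p i \<noteq> 0 \<and> 1 - a * q i \<noteq> 0
      \<and> 1 - c * p i \<noteq> 0 \<and> 1 - c * q i \<noteq> 0"
  shows "bilinear_eqs a c (tau_casorati a c N cs ds p q xi0 eta0)"
proof -
  define \<psi> where "\<psi> m k j y i = phi a c cs ds p q xi0 eta0 i j m k y" for m k j y i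
  have tau: "tau_casorati a c N cs ds p q xi0 eta0 n m k = casorati N (\<psi> m k) n" for n m k
    by (simp add: fun_eq_iff tau_casorati_def casorati_def casorati_mat_def \<psi>_def)
  have deriv: "((\<lambda>y. \<psi> m k j y i) has_field_derivative \<psi> m k (j - 1) y i) (at y)"
    if "i < N" for m k j y i
    using nz that unfolding \<psi>_def phi_eq_plane_waves by (auto intro!: DERIV_add plane_wave_deriv)
  have shift_k: "casorati N (\<lambda>j y i. \<psi> m (k + 1) j y i - a * \<psi> m (k + 1) (j + 1) y i) = casorati N (\<psi> m k)"
    for m k
  proof (intro casorati_cong)
    fix j y i
    assume "i < N"
    then have "p i \<noteq> 0" "q i \<noteq> 0" "1 - a * p i \<noteq> 0" "1 - a * q i \<noteq> 0"
      using nz by auto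
    then show "\<psi> m (k + 1) j y i - a * \<psi> m (k + 1) (j + 1) y i = \<psi> m k j y i"
      by (simp add: \<psi>_def phi_eq_plane_waves plane_wave_shift_k[where k = k] algebra_simps)
  qed
  have shift_m: "casorati N (\<lambda>j y i. \<psi> m k j y i - c * \<psi> m k (j + 1) y i) = casorati N (\<psi> (m + 1) k)"
    for m k
  proof (intro casorati_cong)
    fix j y i
    assume "i < N"
    then have "p i \<noteq> 0" "q i \<noteq> 0" "1 - c * p i \<noteq> 0" "1 - c * q i \<noteq> 0"
      using nz by auto
    then show "\<psi> m k j y i - c * \<psi> m k (j + 1) y i = \<psi> (m + 1) k j y i"
      by (simp add: \<psi>_def phi_eq_plane_waves plane_wave_shift_m) (simp add: algebra_simps)
  qed
  show ?thesis
    unfolding bilinear_eqs_def tau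
  proof (intro allI conjI)
    fix n m k x
    from casorati_hirota[of a N "\<psi> m (k + 1)" n x, OF a N deriv]
    show "1 / a * hirota_D (casorati N (\<psi> m (k + 1)) n) (casorati N (\<psi> m k) n) x
        - casorati N (\<psi> m (k + 1)) n x * casorati N (\<psi> m k) n x
        + casorati N (\<psi> m (k + 1)) (n + 1) x * casorati N (\<psi> m k) (n - 1) x = 0"
      by (simp only: shift_k)
    from casorati_hirota[of c N "\<psi> m k" n x, OF c N deriv]
    show "1 / c * hirota_D (casorati N (\<psi> m k) n) (casorati N (\<psi> (m + 1) k) n) x
        - casorati N (\<psi> m k) n x * casorati N (\<psi> (m + 1) k) n x
        + casorati N (\<psi> m k) (n + 1) x * casorati N (\<psi> (m + 1) k) (n - 1) x = 0"
      by (simp only: shift_m)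
  qed
qed

section \<open>The Gram solution\<close>

definition gram_mat :: "nat \<Rightarrow> (nat \<Rightarrow> nat \<Rightarrow> complex) \<Rightarrow> (nat \<Rightarrow> complex) \<Rightarrow> (nat \<Rightarrow> complex)
    \<Rightarrow> (nat \<Rightarrow> complex) \<Rightarrow> (nat \<Rightarrow> complex) \<Rightarrow> complex mat" where
  "gram_mat N C p q u v = mat N N (\<lambda>(i, j). C i j + u i * v j / (p i + q j))"

lemma gram_mat_carrier [simp]: "gram_mat N C p q u v \<in> carrier_mat N N"
  by (simp add: gram_mat_def)

lemma gram_mat_cong:
  "(\<And>i. i < N \<Longrightarrow> u i = u' i) \<Longrightarrow> (\<And>j. j < N \<Longrightarrow> v j = v' j)
    \<Longrightarrow> gram_mat N C p q u v = gram_mat N C p q u' v'"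
  by (intro eq_matI) (auto simp: gram_mat_def)

lemma gram_mat_eq_rank_one_upd:
  assumes "\<And>i j. i < N \<Longrightarrow> j < N \<Longrightarrow> u' i * v' j / (p i + q j) = u i * v j / (p i + q j) + f i * g j"
  shows "gram_mat N C p q u' v' = rank_one_upd (gram_mat N C p q u v) f g"
  using assms by (intro eq_matI) (auto simp: gram_mat_def rank_one_upd_def)

lemma adj_form_cong:
  assumes "A \<in> carrier_mat n n"
    and "\<And>i. i < n \<Longrightarrow> x i = x' i" and "\<And>j. j < n \<Longrightarrow> v j = v' j"
  shows "adj_form A x v = adj_form A x' v'"
proof -
  have "set_col A j x = set_col A j x'" for j
    using assms(1,2) by (rule set_col_cong)
  then show ?thesis
    using assms by (auto simp: adj_form_def intro!: sum.cong)
qed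

lemma has_field_derivative_det_gram_mat:
  fixes u v :: "complex \<Rightarrow> nat \<Rightarrow> complex"
  assumes nz: "\<And>i j. i < N \<Longrightarrow> j < N \<Longrightarrow> p i \<noteq> 0 \<and> q j \<noteq> 0 \<and> p i + q j \<noteq> 0"
    and du: "\<And>i. i < N \<Longrightarrow> ((\<lambda>y. u y i) has_field_derivative u x i / p i) (at x)"
    and dv: "\<And>j. j < N \<Longrightarrow> ((\<lambda>y. v y j) has_field_derivative v x j / q j) (at x)"
  shows "((\<lambda>y. det (gram_mat N C p q (u y) (v y))) has_field_derivative
    adj_form (gram_mat N C p q (u x) (v x)) (\<lambda>i. u x i / p i) (\<lambda>j. v x j / q j)) (at x)"
  unfolding gram_mat_def
proof (rule has_field_derivative_det_rank_one)
  fix i j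
  assume ij: "i < N" "j < N"
  have "((\<lambda>y. C i j + u y i * v y j / (p i + q j)) has_field_derivative
      0 + (u x i * (v x j / q j) + u x i / p i * v x j) / (p i + q j)) (at x)"
    by (intro DERIV_add DERIV_const DERIV_cdivide DERIV_mult' du dv ij)
  moreover have "0 + (u x i * (v x j / q j) + u x i / p i * v x j) / (p i + q j) = u x i / p i * (v x j / q j)"
  proof -
    have "u x i * (v x j / q j) + u x i / p i * v x j = (p i + q j) * (u x i / p i * (v x j / q j))"
      using nz[OF ij] by (simp add: field_simps)
    then show ?thesis
      using nz[OF ij] by simp
  qed
  ultimately show "((\<lambda>y. C i j + u y i * v y j / (p i + q j)) has_field_derivative
      u x i / p i * (v x j / q j)) (at x)"
    by simp
qed

lemma gram_hirota:
  fixes u v :: "complex \<Rightarrow> nat \<Rightarrow> complex" and C :: "nat \<Rightarrow> nat \<Rightarrow> complex"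
  assumes a: "a \<noteq> 0"
    and nz: "\<And>i j. i < N \<Longrightarrow> j < N \<Longrightarrow>
      p i \<noteq> 0 \<and> q j \<noteq> 0 \<and> p i + q j \<noteq> 0 \<and> 1 - a * p i \<noteq> 0 \<and> 1 + a * q j \<noteq> 0"
    and du: "\<And>i. i < N \<Longrightarrow> ((\<lambda>y. u y i) has_field_derivative u x i / p i) (at x)"
    and dv: "\<And>j. j < N \<Longrightarrow> ((\<lambda>y. v y j) has_field_derivative v x j / q j) (at x)"
  defines "\<tau> \<equiv> \<lambda>\<alpha> \<beta> y. det (gram_mat N C p q (\<lambda>i. \<alpha> i * u y i) (\<lambda>j. \<beta> j * v y j))"
  shows "(1 / a) * hirota_D (\<tau> (\<lambda>i. 1 / (1 - a * p i)) (\<lambda>j. 1 + a * q j)) (\<tau> (\<lambda>_. 1) (\<lambda>_. 1)) x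
      - \<tau> (\<lambda>i. 1 / (1 - a * p i)) (\<lambda>j. 1 + a * q j) x * \<tau> (\<lambda>_. 1) (\<lambda>_. 1) x
      + \<tau> (\<lambda>i. p i / (1 - a * p i)) (\<lambda>j. - (1 + a * q j) / q j) x * \<tau> (\<lambda>i. 1 / p i) (\<lambda>j. - q j) x
    = 0"
proof -
  define A where "A = gram_mat N C p q (u x) (v x)"
  define u1 where "u1 = (\<lambda>i. u x i / (1 - a * p i))"
  define f where "f = (\<lambda>i. u x i / p i)"
  define g where "g = (\<lambda>j. v x j / q j)"
  have A: "A \<in> carrier_mat N N"
    by (simp add: A_def)
  have p: "p i \<noteq> 0" and ap: "1 - a * p i \<noteq> 0" if "i < N" for i
    using nz[OF that that] by auto
  have q: "q j \<noteq> 0" and aq: "1 + a * q j \<noteq> 0" if "j < N" for j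
    using nz[OF that that] by auto
  have pq: "p i + q j \<noteq> 0" if "i < N" "j < N" for i j
    using nz[OF that] by auto
  have d\<tau>: "deriv (\<tau> \<alpha> \<beta>) x = adj_form (gram_mat N C p q (\<lambda>i. \<alpha> i * u x i) (\<lambda>j. \<beta> j * v x j))
      (\<lambda>i. \<alpha> i * u x i / p i) (\<lambda>j. \<beta> j * v x j / q j)" for \<alpha> \<beta>
  proof (rule DERIV_imp_deriv)
    have "((\<lambda>y. \<alpha> i * u y i) has_field_derivative \<alpha> i * u x i / p i) (at x)" if "i < N" for i
      using DERIV_cmult[OF du[OF that], of "\<alpha> i"] by simp
    moreover have "((\<lambda>y. \<beta> j * v y j) has_field_derivative \<beta> j * v x j / q j) (at x)" if "j < N" for j
      using DERIV_cmult[OF dv[OF that], of "\<beta> j"] by simp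
    ultimately show "(\<tau> \<alpha> \<beta> has_field_derivative adj_form (gram_mat N C p q (\<lambda>i. \<alpha> i * u x i) (\<lambda>j. \<beta> j * v x j))
        (\<lambda>i. \<alpha> i * u x i / p i) (\<lambda>j. \<beta> j * v x j / q j)) (at x)"
      unfolding \<tau>_def using nz by (intro has_field_derivative_det_gram_mat) auto
  qed
  have M0: "gram_mat N C p q (\<lambda>i. 1 * u x i) (\<lambda>j. 1 * v x j) = A"
    by (simp add: A_def)
  have M1: "gram_mat N C p q (\<lambda>i. 1 / (1 - a * p i) * u x i) (\<lambda>j. (1 + a * q j) * v x j)
      = rank_one_upd A (\<lambda>i. a * u1 i) (v x)"
    unfolding A_def
  proof (rule gram_mat_eq_rank_one_upd)
    fix i j
    assume "i < N" "j < N"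
    with ap pq show "1 / (1 - a * p i) * u x i * ((1 + a * q j) * v x j) / (p i + q j)
        = u x i * v x j / (p i + q j) + a * u1 i * v x j"
      by (simp add: u1_def field_simps)
  qed
  have Mp: "gram_mat N C p q (\<lambda>i. p i / (1 - a * p i) * u x i) (\<lambda>j. - (1 + a * q j) / q j * v x j)
      = rank_one_upd A u1 (\<lambda>j. - g j)"
    unfolding A_def
  proof (rule gram_mat_eq_rank_one_upd)
    fix i j
    assume "i < N" "j < N"
    with ap q pq show "p i / (1 - a * p i) * u x i * (- (1 + a * q j) / q j * v x j) / (p i + q j)
        = u x i * v x j / (p i + q j) + u1 i * - g j"
      by (simp add: u1_def g_def field_simps)
  qed
  have Mm: "gram_mat N C p q (\<lambda>i. 1 / p i * u x i) (\<lambda>j. - q j * v x j) = rank_one_upd A f (\<lambda>j. - v x j)"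
    unfolding A_def
  proof (rule gram_mat_eq_rank_one_upd)
    fix i j
    assume "i < N" "j < N"
    with p pq show "1 / p i * u x i * (- q j * v x j) / (p i + q j) = u x i * v x j / (p i + q j) + f i * - v x j"
      by (simp add: f_def field_simps)
  qed
  have "deriv (\<tau> (\<lambda>i. 1 / (1 - a * p i)) (\<lambda>j. 1 + a * q j)) x
      = adj_form (rank_one_upd A (\<lambda>i. a * u1 i) (v x)) (\<lambda>i. f i + a * u1 i) (\<lambda>j. g j + a * v x j)"
  proof -
    have "1 / (1 - a * p i) * u x i / p i = f i + a * u1 i" if "i < N" for i
      using p[OF that] ap[OF that] by (simp add: f_def u1_def field_simps)
    moreover have "(1 + a * q j) * v x j / q j = g j + a * v x j" if "j < N" for j
      using q[OF that] by (simp add: g_def field_simps)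
    ultimately show ?thesis
      unfolding d\<tau> M1 using A by (intro adj_form_cong[of _ N]) auto
  qed
  moreover have "deriv (\<tau> (\<lambda>_. 1) (\<lambda>_. 1)) x = adj_form A f g"
    using d\<tau>[of "\<lambda>_. 1" "\<lambda>_. 1"] M0 by (simp add: f_def g_def)
  ultimately show ?thesis
    using hirota_rank_one[OF A a, of u1 "v x" f g] M0 M1 Mp Mm
    by (simp add: hirota_D_def \<tau>_def)
qed

definition dual_wave :: "complex \<Rightarrow> complex \<Rightarrow> complex \<Rightarrow> complex \<Rightarrow> int \<Rightarrow> int \<Rightarrow> int
    \<Rightarrow> complex \<Rightarrow> complex" where
  "dual_wave a c r x0 n m k y = (- r) powi (- n) * (1 + c * r) powi (- m) * (1 + a * r) powi k * exp (y / r + x0)"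

lemma dual_wave_succ_n:
  "r \<noteq> 0 \<Longrightarrow> dual_wave a c r x0 (n + 1) m k y = - dual_wave a c r x0 n m k y / r"
  using power_int_diff[of "- r" "- n" 1] by (simp add: dual_wave_def)

lemma dual_wave_succ_m:
  "1 + c * r \<noteq> 0 \<Longrightarrow> dual_wave a c r x0 n (m + 1) k y = dual_wave a c r x0 n m k y / (1 + c * r)"
  using power_int_diff[of "1 + c * r" "- m" 1] by (simp add: dual_wave_def)

lemma dual_wave_succ_k:
  "1 + a * r \<noteq> 0 \<Longrightarrow> dual_wave a c r x0 n m (k + 1) y = (1 + a * r) * dual_wave a c r x0 n m k y"
  by (simp add: dual_wave_def power_int_add_1)

lemma dual_wave_deriv:
  "r \<noteq> 0 \<Longrightarrow>
    ((\<lambda>y. dual_wave a c r x0 n m k y) has_field_derivative dual_wave a c r x0 n m k y / r) (at y)"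
  unfolding dual_wave_def by (auto intro!: derivative_eq_intros)

lemma tau_gram_eq_gram_mat:
  "tau_gram a c N C p q xi0 eta0 n m k y = det (gram_mat N C p q
    (\<lambda>i. plane_wave a c 1 (p i) (xi0 i) n m k y) (\<lambda>j. dual_wave a c (q j) (eta0 j) n m k y))"
proof -
  have "- p i / q j = p i / (- q j)" for i j
    by simp
  then have "(- p i / q j) powi n = p i powi n * (- q j) powi (- n)"
    and "((1 - c * p i) / (1 + c * q j)) powi m = (1 - c * p i) powi m * (1 + c * q j) powi (- m)"
    and "((1 - a * p i) / (1 + a * q j)) powi (- k) = (1 - a * p i) powi (- k) * (1 + a * q j) powi k"
    for i j
    by (simp_all only: power_int_minus divide_inverse inverse_inverse_eq power_int_mult_distrib
        power_int_inverse inverse_mult_distrib)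
  then show ?thesis
    unfolding tau_gram_def gram_mat_def plane_wave_def dual_wave_def
    by (intro arg_cong[where f = det] eq_matI) (simp_all add: exp_add)
qed

lemma bilinear_eqs_tau_gram:
  assumes a: "a \<noteq> 0" and c: "c \<noteq> 0"
    and nz: "\<forall>i<N. p i \<noteq> 0 \<and> q i \<noteq> 0 \<and> 1 - a * p i \<noteq> 0 \<and> 1 + a * q i \<noteq> 0
      \<and> 1 - c * p i \<noteq> 0 \<and> 1 + c * q i \<noteq> 0"
    and pq: "\<forall>i<N. \<forall>j<N. p i + q j \<noteq> 0"
  shows "bilinear_eqs a c (tau_gram a c N C p q xi0 eta0)"
proof -
  let ?\<tau> = "tau_gram a c N C p q xi0 eta0"
  define u where "u n m k y i = plane_wave a c 1 (p i) (xi0 i) n m k y" for n m k y i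
  define v where "v n m k y j = dual_wave a c (q j) (eta0 j) n m k y" for n m k y j
  have rescale: "?\<tau> n' m' k'
      = (\<lambda>y. det (gram_mat N C p q (\<lambda>i. \<alpha> i * u n m k y i) (\<lambda>j. \<beta> j * v n m k y j)))"
    if "\<And>i y. i < N \<Longrightarrow> u n' m' k' y i = \<alpha> i * u n m k y i"
      and "\<And>j y. j < N \<Longrightarrow> v n' m' k' y j = \<beta> j * v n m k y j"
    for n' m' k' n m k \<alpha> \<beta>
    using that
    by (auto simp: fun_eq_iff tau_gram_eq_gram_mat u_def v_def intro!: arg_cong[where f = det] gram_mat_cong)
  have u_pred: "u (n - 1) m k y i = 1 / p i * u n m k y i" and v_pred: "v (n - 1) m k y i = - q i * v n m k y i"
    if "i < N" for n m k y i
    using that nz plane_wave_succ_n[of "p i" a c 1 "xi0 i" "n - 1"] dual_wave_succ_n[of "q i" a c "eta0 i" "n - 1"]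
    by (auto simp: u_def v_def)
  have du: "((\<lambda>y. u n m k y i) has_field_derivative u n m k x i / p i) (at x)"
    and dv: "((\<lambda>y. v n m k y i) has_field_derivative v n m k x i / q i) (at x)" if "i < N" for n m k x i
    using that nz plane_wave_deriv[of "p i" a c 1 "xi0 i" n m k x] dual_wave_deriv[of "q i" a c "eta0 i" n m k x]
      u_pred[OF that, of n m k x]
    by (auto simp: u_def v_def)
  show ?thesis
    unfolding bilinear_eqs_def
  proof (intro allI conjI)
    fix n m k x
    have "?\<tau> n m (k + 1)
        = (\<lambda>y. det (gram_mat N C p q (\<lambda>i. 1 / (1 - a * p i) * u n m k y i) (\<lambda>j. (1 + a * q j) * v n m k y j)))"
      using nz by (intro rescale) (auto simp: u_def v_def plane_wave_succ_k dual_wave_succ_k)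
    moreover have "?\<tau> n m k
        = (\<lambda>y. det (gram_mat N C p q (\<lambda>i. 1 * u n m k y i) (\<lambda>j. 1 * v n m k y j)))"
      by (intro rescale) auto
    moreover have "?\<tau> (n + 1) m (k + 1)
        = (\<lambda>y. det (gram_mat N C p q (\<lambda>i. p i / (1 - a * p i) * u n m k y i)
            (\<lambda>j. - (1 + a * q j) / q j * v n m k y j)))"
      using nz by (intro rescale; simp add: u_def v_def plane_wave_succ_n plane_wave_succ_k
          dual_wave_succ_n dual_wave_succ_k; simp add: field_simps)
    moreover have "?\<tau> (n - 1) m k
        = (\<lambda>y. det (gram_mat N C p q (\<lambda>i. 1 / p i * u n m k y i) (\<lambda>j. - q j * v n m k y j)))"
      by (intro rescale u_pred v_pred)
    moreover note gram_hirota[of a N p q "u n m k" x "v n m k" C, OF a _ du dv]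
    ultimately show "1 / a * hirota_D (?\<tau> n m (k + 1)) (?\<tau> n m k) x
        - ?\<tau> n m (k + 1) x * ?\<tau> n m k x
        + ?\<tau> (n + 1) m (k + 1) x * ?\<tau> (n - 1) m k x = 0"
      using nz pq by simp
  next
    \<comment> \<open>the same identity with c in place of a, based at m + 1 instead of k\<close>
    fix n m k x
    show "1 / c * hirota_D (?\<tau> n m k) (?\<tau> n (m + 1) k) x
        - ?\<tau> n m k x * ?\<tau> n (m + 1) k x
        + ?\<tau> (n + 1) m k x * ?\<tau> (n - 1) (m + 1) k x = 0"
    proof -
      have "?\<tau> n m k
          = (\<lambda>y. det (gram_mat N C p q (\<lambda>i. 1 / (1 - c * p i) * u n (m + 1) k y i)
              (\<lambda>j. (1 + c * q j) * v n (m + 1) k y j)))"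
        using nz by (intro rescale; simp add: u_def v_def plane_wave_succ_m dual_wave_succ_m)
      moreover have "?\<tau> n (m + 1) k
          = (\<lambda>y. det (gram_mat N C p q (\<lambda>i. 1 * u n (m + 1) k y i) (\<lambda>j. 1 * v n (m + 1) k y j)))"
        by (intro rescale) auto
      moreover have "?\<tau> (n + 1) m k
          = (\<lambda>y. det (gram_mat N C p q (\<lambda>i. p i / (1 - c * p i) * u n (m + 1) k y i)
              (\<lambda>j. - (1 + c * q j) / q j * v n (m + 1) k y j)))"
      proof (rule rescale)
        fix i y
        assume "i < N"
        with nz show "u (n + 1) m k y i = p i / (1 - c * p i) * u n (m + 1) k y i"
          by (simp add: u_def plane_wave_succ_n plane_wave_succ_m)
      next
        fix j y
        assume "j < N"
        with nz have "q j \<noteq> 0" "1 + c * q j \<noteq> 0"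
          by auto
        moreover from this have "v (n + 1) m k y j = - v n m k y j / q j"
          and "v n (m + 1) k y j = v n m k y j / (1 + c * q j)"
          by (simp_all add: v_def dual_wave_succ_n dual_wave_succ_m)
        ultimately show "v (n + 1) m k y j = - (1 + c * q j) / q j * v n (m + 1) k y j"
          by (simp add: field_simps)
      qed
      moreover have "?\<tau> (n - 1) (m + 1) k
          = (\<lambda>y. det (gram_mat N C p q (\<lambda>i. 1 / p i * u n (m + 1) k y i) (\<lambda>j. - q j * v n (m + 1) k y j)))"
        by (intro rescale u_pred v_pred)
      moreover note gram_hirota[of c N p q "u n (m + 1) k" x "v n (m + 1) k" C, OF c _ du dv]
      ultimately show ?thesis
        using nz pq by simp
    qed
  qed
qed

theorem lemma3:
  fixes a c :: complex and N :: nat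
  assumes "a \<noteq> 0" and "c \<noteq> 0" and "N \<ge> 1"
  shows "(\<forall>cs ds p q xi0 eta0.
            (\<forall>i<N. p i \<noteq> 0 \<and> q i \<noteq> 0 \<and> 1 - a * p i \<noteq> 0 \<and> 1 - a * q i \<noteq> 0
                 \<and> 1 - c * p i \<noteq> 0 \<and> 1 - c * q i \<noteq> 0)
            \<longrightarrow> bilinear_eqs a c (tau_casorati a c N cs ds p q xi0 eta0))
       \<and> (\<forall>C p q xi0 eta0.
            (\<forall>i<N. p i \<noteq> 0 \<and> q i \<noteq> 0 \<and> 1 - a * p i \<noteq> 0 \<and> 1 + a * q i \<noteq> 0
                 \<and> 1 - c * p i \<noteq> 0 \<and> 1 + c * q i \<noteq> 0)
            \<and> (\<forall>i<N. \<forall>j<N. p i + q j \<noteq> 0)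
            \<longrightarrow> bilinear_eqs a c (tau_gram a c N C p q xi0 eta0))"
proof (intro conjI allI impI)
  fix cs ds p q xi0 eta0
  assume "\<forall>i<N. p i \<noteq> 0 \<and> q i \<noteq> 0 \<and> 1 - a * p i \<noteq> 0 \<and> 1 - a * q i \<noteq> 0
    \<and> 1 - c * p i \<noteq> 0 \<and> 1 - c * q i \<noteq> 0"
  with assms show "bilinear_eqs a c (tau_casorati a c N cs ds p q xi0 eta0)"
    by (intro bilinear_eqs_tau_casorati) auto
next
  fix C p q xi0 eta0
  assume "(\<forall>i<N. p i \<noteq> 0 \<and> q i \<noteq> 0 \<and> 1 - a * p i \<noteq> 0 \<and> 1 + a * q i \<noteq> 0
      \<and> 1 - c * p i \<noteq> 0 \<and> 1 + c * q i \<noteq> 0)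
    \<and> (\<forall>i<N. \<forall>j<N. p i + q j \<noteq> 0)"
  with assms show "bilinear_eqs a c (tau_gram a c N C p q xi0 eta0)"
    by (intro bilinear_eqs_tau_gram) auto
qed

end
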